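(* Let $(M,d)$ be a bounded metric space and let $\mathcal S$ be a group acting on $M$ such that each $s\in\mathcal S$ is an orbit-nonexpansive self-mapping of $M$. Then $\mathcal S$ is a family of interlaced orbit-nonexpansive mappings, i.e. $d(tx,sy)\le \sup\{D(x,o_r(y)): r\in\mathcal S\}$ for all $s,t\in\mathcal S$ and $x,y\in M$.
   Context: For a metric space $(M,d)$, a mapping $T:M\to M$ and $x\in M$, the orbit of $x$ is $o_T(x)=\{x\}\cup\{T^nx:n\in\mathbb N\}$. For $x\in M$ and bounded $A\subseteq M$, $D(x,A)=\sup\{d(x,a):a\in A\}$. A mapping $T:M\to M$ is orbit-nonexpansive if $d(Tx,Ty)\le D(x,o_T(y))$ for all $x,y\in M$. A group $\mathcal S$ acts on $M$ if each $s\in\mathcal S$ defines a map $M\to M$, the identity element acts as the identity map, and $(s\cdot t)(x)=s(t(x))$ for all $s,t\in\mathcal S$, $x\in M$. A family $\mathcal F$ of self-mappings of a bounded metric space $M$ is a family of interlaced orbit-nonexpansive mappings if $d(Tx,Sy)\le\sup\{D(x,o_R(y)):R\in\mathcal F\}$ for all $T,S\in\mathcal F$ and $x,y\in M$. *)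

theory Defs
  imports "HOL-Analysis.Analysis" "HOL-Algebra.Group"
begin

definition orbit :: "('a \<Rightarrow> 'a) \<Rightarrow> 'a \<Rightarrow> 'a set" where
  "orbit T x = {x} \<union> {(T ^^ n) x | n. n \<ge> 1}"

definition Dsup :: "('a \<Rightarrow> 'a \<Rightarrow> real) \<Rightarrow> 'a \<Rightarrow> 'a set \<Rightarrow> real" where
  "Dsup d x A = (SUP a\<in>A. d x a)"

definition orbit_nonexpansive :: "'a set \<Rightarrow> ('a \<Rightarrow> 'a \<Rightarrow> real) \<Rightarrow> ('a \<Rightarrow> 'a) \<Rightarrow> bool" where
  "orbit_nonexpansive M d T \<longleftrightarrow>
     (\<forall>x\<in>M. T x \<in> M) \<and> (\<forall>x\<in>M. \<forall>y\<in>M. d (T x) (T y) \<le> Dsup d x (orbit T y))"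

definition interlaced_orbit_nonexpansive ::
  "'a set \<Rightarrow> ('a \<Rightarrow> 'a \<Rightarrow> real) \<Rightarrow> ('a \<Rightarrow> 'a) set \<Rightarrow> bool" where
  "interlaced_orbit_nonexpansive M d F \<longleftrightarrow>
     (\<forall>T\<in>F. \<forall>x\<in>M. T x \<in> M) \<and>
     (\<forall>T\<in>F. \<forall>S\<in>F. \<forall>x\<in>M. \<forall>y\<in>M. d (T x) (S y) \<le> (SUP R\<in>F. Dsup d x (orbit R y)))"

definition group_acts_on :: "('g, 'b) monoid_scheme \<Rightarrow> 'a set \<Rightarrow> ('g \<Rightarrow> 'a \<Rightarrow> 'a) \<Rightarrow> bool" where
  "group_acts_on G M \<phi> \<longleftrightarrow>
     group G \<and>
     (\<forall>s\<in>carrier G. \<forall>x\<in>M. \<phi> s x \<in> M) \<and>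
     (\<forall>x\<in>M. \<phi> \<one>\<^bsub>G\<^esub> x = x) \<and>
     (\<forall>s\<in>carrier G. \<forall>t\<in>carrier G. \<forall>x\<in>M. \<phi> (s \<otimes>\<^bsub>G\<^esub> t) x = \<phi> s (\<phi> t x))"

end

theory Submission
  imports Defs
begin

text \<open>Write \<open>t\<^sup>-\<^sup>1 s y\<close> as \<open>z\<close>; then \<open>d(tx, sy) = d(tx, tz) \<le> D(x, o\<^sub>t(z))\<close> by orbit-nonexpansiveness
  of \<open>t\<close>. Every point of \<open>o\<^sub>t(z)\<close> has the form \<open>t\<^sup>n t\<^sup>-\<^sup>1 s y = h y\<close> for some \<open>h\<close> in the group,
  and \<open>h y\<close> lies in \<open>o\<^sub>h(y)\<close>, so its distance to \<open>x\<close> is at most \<open>D(x, o\<^sub>h(y))\<close>. Boundedness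
  of \<open>M\<close> makes all these suprema finite.\<close>

lemma self_in_orbit: "x \<in> orbit T x"
  by (simp add: orbit_def)

lemma image_in_orbit: "T x \<in> orbit T x"
  by (auto simp: orbit_def intro!: exI[of _ 1])

lemma orbit_subset:
  assumes "\<forall>x\<in>M. T x \<in> M" and "y \<in> M"
  shows "orbit T y \<subseteq> M"
proof -
  have "(T ^^ n) y \<in> M" for n
    using assms by (induction n) auto
  then show ?thesis
    using assms(2) by (auto simp: orbit_def)
qed

lemma Dsup_least:
  assumes "A \<noteq> {}" and "\<And>a. a \<in> A \<Longrightarrow> d x a \<le> c"
  shows "Dsup d x A \<le> c"
  unfolding Dsup_def using assms by (rule cSUP_least)

context Metric_space
begin

lemma Dsup_upper:
  assumes "mbounded A" and "x \<in> M" and "a \<in> A"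
  shows "d x a \<le> Dsup d x A"
proof -
  have "mbounded (insert x A)"
    using assms(1,2) by (simp add: mbounded_insert)
  then obtain B where "\<forall>u\<in>insert x A. \<forall>v\<in>insert x A. d u v \<le> B"
    unfolding mbounded_alt by blast
  then have "bdd_above (d x ` A)"
    by (intro bdd_aboveI[of _ B]) auto
  then show ?thesis
    unfolding Dsup_def using assms(3) by (rule cSUP_upper2) simp
qed

lemma Dsup_le_SUP_orbits:
  assumes bounded: "mbounded M" and maps: "\<forall>R\<in>F. \<forall>z\<in>M. R z \<in> M"
    and "x \<in> M" and "y \<in> M" and "A \<noteq> {}" and A: "A \<subseteq> (\<lambda>R. R y) ` F"
  shows "Dsup d x A \<le> (SUP R\<in>F. Dsup d x (orbit R y))"
proof -
  obtain B where B: "\<forall>u\<in>M. \<forall>v\<in>M. d u v \<le> B"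
    using bounded mbounded_alt by blast
  have orbit_M: "orbit R y \<subseteq> M" if "R \<in> F" for R
    using maps that \<open>y \<in> M\<close> by (intro orbit_subset) auto
  have "Dsup d x (orbit R y) \<le> B" if "R \<in> F" for R
    using orbit_M[OF that] B \<open>x \<in> M\<close> by (intro Dsup_least) (auto simp: orbit_def)
  then have bdd: "bdd_above ((\<lambda>R. Dsup d x (orbit R y)) ` F)"
    by (intro bdd_aboveI[of _ B]) auto
  show ?thesis
  proof (rule Dsup_least[OF \<open>A \<noteq> {}\<close>])
    fix a assume "a \<in> A"
    then obtain R where "R \<in> F" and "a = R y"
      using A by auto
    then have "d x a \<le> Dsup d x (orbit R y)"
      using orbit_M bounded \<open>x \<in> M\<close>
      by (intro Dsup_upper) (auto intro: mbounded_subset image_in_orbit)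
    also have "\<dots> \<le> (SUP R\<in>F. Dsup d x (orbit R y))"
      using \<open>R \<in> F\<close> bdd by (rule cSUP_upper)
    finally show "d x a \<le> (SUP R\<in>F. Dsup d x (orbit R y))" .
  qed
qed

end

lemma group_acts_on_group: "group_acts_on G M \<phi> \<Longrightarrow> group G"
  by (simp add: group_acts_on_def)

lemma group_acts_on_mult:
  "group_acts_on G M \<phi> \<Longrightarrow> s \<in> carrier G \<Longrightarrow> t \<in> carrier G \<Longrightarrow> x \<in> M \<Longrightarrow>
    \<phi> (s \<otimes>\<^bsub>G\<^esub> t) x = \<phi> s (\<phi> t x)"
  by (simp add: group_acts_on_def)

lemma group_acts_on_translate:
  assumes act: "group_acts_on G M \<phi>" and s: "s \<in> carrier G" and t: "t \<in> carrier G"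
    and y: "y \<in> M"
  shows "\<phi> s y = \<phi> t (\<phi> (inv\<^bsub>G\<^esub> t \<otimes>\<^bsub>G\<^esub> s) y)"
proof -
  interpret group G
    using act by (rule group_acts_on_group)
  have g: "inv\<^bsub>G\<^esub> t \<otimes>\<^bsub>G\<^esub> s \<in> carrier G"
    using s t by simp
  have "t \<otimes>\<^bsub>G\<^esub> (inv\<^bsub>G\<^esub> t \<otimes>\<^bsub>G\<^esub> s) = s"
    using s t by (simp flip: m_assoc)
  then show ?thesis
    using group_acts_on_mult[OF act t g y] by simp
qed

lemma group_acts_on_funpow:
  assumes act: "group_acts_on G M \<phi>" and t: "t \<in> carrier G" and g: "g \<in> carrier G"
    and y: "y \<in> M"
  shows "(\<phi> t ^^ n) (\<phi> g y) = \<phi> (t [^]\<^bsub>G\<^esub> n \<otimes>\<^bsub>G\<^esub> g) y"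
proof -
  interpret group G
    using act by (rule group_acts_on_group)
  show ?thesis
  proof (induction n)
    case 0
    show ?case
      using g by simp
  next
    case (Suc n)
    have "(\<phi> t ^^ Suc n) (\<phi> g y) = \<phi> (t \<otimes>\<^bsub>G\<^esub> (t [^]\<^bsub>G\<^esub> n \<otimes>\<^bsub>G\<^esub> g)) y"
      using Suc act t g y by (simp add: group_acts_on_mult)
    also have "t \<otimes>\<^bsub>G\<^esub> (t [^]\<^bsub>G\<^esub> n \<otimes>\<^bsub>G\<^esub> g) = t [^]\<^bsub>G\<^esub> Suc n \<otimes>\<^bsub>G\<^esub> g"
      using t g by (subst nat_pow_Suc2) (simp_all add: m_assoc)
    finally show ?case .
  qed
qed

lemma orbit_of_group_acts_on:
  assumes act: "group_acts_on G M \<phi>" and "t \<in> carrier G" and "g \<in> carrier G" and "y \<in> M"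
  shows "orbit (\<phi> t) (\<phi> g y) \<subseteq> (\<lambda>R. R y) ` \<phi> ` carrier G"
proof -
  interpret group G
    using act by (rule group_acts_on_group)
  have iterates: "(\<phi> t ^^ n) (\<phi> g y) \<in> (\<lambda>R. R y) ` \<phi> ` carrier G" for n
    using assms by (auto simp: group_acts_on_funpow)
  show ?thesis
    using iterates iterates[of 0] unfolding orbit_def by auto
qed

theorem proposition3p2:
  fixes M :: "'a set" and d :: "'a \<Rightarrow> 'a \<Rightarrow> real"
    and G :: "('g, 'b) monoid_scheme" and \<phi> :: "'g \<Rightarrow> 'a \<Rightarrow> 'a"
  assumes "Metric_space M d"
    and "Metric_space.mbounded M d M"
    and "group_acts_on G M \<phi>"
    and "\<forall>s\<in>carrier G. orbit_nonexpansive M d (\<phi> s)"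
  shows "interlaced_orbit_nonexpansive M d (\<phi> ` carrier G)"
proof -
  interpret Metric_space M d by fact
  interpret group G
    using assms(3) by (rule group_acts_on_group)
  have maps: "\<forall>R\<in>\<phi> ` carrier G. \<forall>z\<in>M. R z \<in> M"
    using assms(3) by (auto simp: group_acts_on_def)
  have "d (\<phi> t x) (\<phi> s y) \<le> (SUP R\<in>\<phi> ` carrier G. Dsup d x (orbit R y))"
    if t: "t \<in> carrier G" and s: "s \<in> carrier G" and x: "x \<in> M" and y: "y \<in> M" for t s x y
  proof -
    define g where "g = inv\<^bsub>G\<^esub> t \<otimes>\<^bsub>G\<^esub> s"
    have g: "g \<in> carrier G" and z: "\<phi> g y \<in> M"
      using s t y maps by (auto simp: g_def)
    have "d (\<phi> t x) (\<phi> s y) = d (\<phi> t x) (\<phi> t (\<phi> g y))"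
      using group_acts_on_translate[OF assms(3) s t y] by (simp add: g_def)
    also have "\<dots> \<le> Dsup d x (orbit (\<phi> t) (\<phi> g y))"
      using assms(4) t x z by (simp add: orbit_nonexpansive_def)
    also have "\<dots> \<le> (SUP R\<in>\<phi> ` carrier G. Dsup d x (orbit R y))"
      using assms(2) maps x y orbit_of_group_acts_on[OF assms(3) t g y]
      by (intro Dsup_le_SUP_orbits) (auto intro: self_in_orbit)
    finally show ?thesis .
  qed
  then show ?thesis
    using maps by (auto simp: interlaced_orbit_nonexpansive_def)
qed

end
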